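(* Let $d$ be a positive integer and let $A\in\mathbb{R}^{[2]\times[n]}$ be a matrix that does not have an elimination ordering. Then there exists $b\in\mathbb{R}^{[2]}$ such that the solution graph $G(R(A,b))$ is not connected.
   Context: Fix a positive integer $d$ and let $D=\{0,1,\dots,d\}$; $[n]=\{1,\dots,n\}$. For $A\in\mathbb{R}^{[m]\times[n]}$ and $b\in\mathbb{R}^{[m]}$, $R(A,b)=\{x\in D^{[n]} : Ax\ge b\}$. For $R\subseteq D^{[n]}$, the solution graph $G(R)$ is the undirected graph with vertex set $R$ in which $x,y$ are adjacent iff they differ in exactly one coordinate. A matrix $A=(a_{ij})$ with column index set $J$ can be eliminated at column $j\in J$ if (i) for every row $i$ with $a_{ij}>0$ we have $a_{ij'}=0$ for all $j'\in J\setminus\{j\}$, or (ii) for every row $i$ with $a_{ij}<0$ we have $a_{ij'}=0$ for all $j'\in J\setminus\{j\}$. For $J'\subseteq[n]$, $\mathrm{elm}(A,J')$ is the submatrix of $A$ obtained by deleting the columns indexed by $J'$. A sequence $(j_1,\dots,j_n)$ of the elements of $[n]$ is an elimination ordering (EO) of $A$ if for every $t\in[n]$ the matrix $\mathrm{elm}(A,\{j_1,\dots,j_{t-1}\})$ can be eliminated at column $j_t$. *)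

theory Defs
  imports Complex_Main
begin

(* Matrices A in R^{[m] x [n]} are functions nat => nat => real, entry a_ij = A i j,
   rows indexed by {1..m}, columns by {1..n}; b :: nat => real with b_i = b i. *)

definition grid :: "nat \<Rightarrow> nat \<Rightarrow> (nat \<Rightarrow> nat) set" where
  "grid d n = {x. (\<forall>j\<in>{1..n}. x j \<le> d) \<and> (\<forall>j. j \<notin> {1..n} \<longrightarrow> x j = 0)}"

definition solset :: "nat \<Rightarrow> nat \<Rightarrow> nat \<Rightarrow> (nat \<Rightarrow> nat \<Rightarrow> real) \<Rightarrow> (nat \<Rightarrow> real) \<Rightarrow> (nat \<Rightarrow> nat) set" where
  "solset d m n A b = {x \<in> grid d n. \<forall>i\<in>{1..m}. (\<Sum>j=1..n. A i j * real (x j)) \<ge> b i}"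

definition adj :: "nat \<Rightarrow> (nat \<Rightarrow> nat) \<Rightarrow> (nat \<Rightarrow> nat) \<Rightarrow> bool" where
  "adj n x y \<longleftrightarrow> card {j\<in>{1..n}. x j \<noteq> y j} = 1"

definition sol_graph_connected :: "nat \<Rightarrow> (nat \<Rightarrow> nat) set \<Rightarrow> bool" where
  "sol_graph_connected n R \<longleftrightarrow>
     (\<forall>x\<in>R. \<forall>y\<in>R. (\<lambda>u v. u \<in> R \<and> v \<in> R \<and> adj n u v)\<^sup>*\<^sup>* x y)"

definition can_elim :: "nat \<Rightarrow> (nat \<Rightarrow> nat \<Rightarrow> real) \<Rightarrow> nat set \<Rightarrow> nat \<Rightarrow> bool" where
  "can_elim m A J j \<longleftrightarrow> j \<in> J \<and>
     ((\<forall>i\<in>{1..m}. A i j > 0 \<longrightarrow> (\<forall>j'\<in>J - {j}. A i j' = 0)) \<or>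
      (\<forall>i\<in>{1..m}. A i j < 0 \<longrightarrow> (\<forall>j'\<in>J - {j}. A i j' = 0)))"

text \<open>Elimination ordering (j_1,...,j_n) = js!0,...,js!(n-1): elm(A,{j_1..j_{t-1}}) has
  column set [n] minus those columns, and must be eliminable at j_t.\<close>
definition is_EO :: "nat \<Rightarrow> nat \<Rightarrow> (nat \<Rightarrow> nat \<Rightarrow> real) \<Rightarrow> nat list \<Rightarrow> bool" where
  "is_EO m n A js \<longleftrightarrow> distinct js \<and> set js = {1..n} \<and>
     (\<forall>t<n. can_elim m A ({1..n} - set (take t js)) (js ! t))"

definition has_EO :: "nat \<Rightarrow> nat \<Rightarrow> (nat \<Rightarrow> nat \<Rightarrow> real) \<Rightarrow> bool" where
  "has_EO m n A \<longleftrightarrow> (\<exists>js. is_EO m n A js)"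

end

theory Submission
  imports Defs
begin

text \<open>A column whose entries share a sign can always be eliminated, so a two-row matrix without
  elimination ordering has two mixed columns, i.e.\ columns with entries of strictly opposite
  signs. Put every other column at the value maximising both rows. We then pick two feasible
  points \<open>x0\<close> and \<open>y\<close> that differ on the mixed columns and a right-hand side \<open>b\<close> just low
  enough that changing any single mixed coordinate of \<open>x0\<close> is infeasible. Since \<open>x0\<close>
  dominates every point agreeing with it on the mixed columns, no path in the solution graph
  starting at \<open>x0\<close> ever changes a mixed coordinate, so it cannot reach \<open>y\<close>.\<close>

definition row_val :: "nat \<Rightarrow> (nat \<Rightarrow> nat \<Rightarrow> real) \<Rightarrow> nat \<Rightarrow> (nat \<Rightarrow> nat) \<Rightarrow> real" where
  "row_val n A i x = (\<Sum>j=1..n. A i j * real (x j))"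

lemma solset_iff:
  "x \<in> solset d m n A b \<longleftrightarrow> x \<in> grid d n \<and> (\<forall>i\<in>{1..m}. b i \<le> row_val n A i x)"
  by (simp add: solset_def row_val_def)

lemma solset_2_iff:
  assumes "{p, q} = {1, 2::nat}"
  shows "x \<in> solset d 2 n A b \<longleftrightarrow>
           x \<in> grid d n \<and> b p \<le> row_val n A p x \<and> b q \<le> row_val n A q x"
proof -
  have "{1..2::nat} = {1, 2}" by auto
  with assms have "{1..2::nat} = {p, q}" by simp
  then show ?thesis by (simp add: solset_iff)
qed

lemma row_val_upd:
  assumes "l \<in> {1..n}"
  shows "row_val n A i (x(l := t)) = row_val n A i x + A i l * (real t - real (x l))"
proof -
  have "row_val n A i (x(l := t)) - row_val n A i x =
          (\<Sum>j=1..n. if j = l then A i l * (real t - real (x l)) else 0)"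
    unfolding row_val_def sum_subtractf[symmetric] by (rule sum.cong) (auto simp: right_diff_distrib)
  also have "\<dots> = A i l * (real t - real (x l))" using assms by simp
  finally show ?thesis by simp
qed

lemma grid_upd: "x \<in> grid d n \<Longrightarrow> l \<in> {1..n} \<Longrightarrow> t \<le> d \<Longrightarrow> x(l := t) \<in> grid d n"
  unfolding grid_def by auto

lemma adj_grid_imp_upd:
  assumes "u \<in> grid d n" "v \<in> grid d n" "adj n u v"
  obtains l t where "l \<in> {1..n}" "v = u(l := t)"
proof -
  obtain l where l: "{j\<in>{1..n}. u j \<noteq> v j} = {l}"
    using assms(3) unfolding adj_def by (rule card_1_singletonE)
  have "l \<in> {1..n}" using l by blast
  moreover have "v = u(l := v l)"
  proof
    fix j show "v j = (u(l := v l)) j"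
      using l assms(1,2) by (cases "j \<in> {1..n}") (auto simp: grid_def)
  qed
  ultimately show ?thesis by (rule that)
qed

lemma not_connected_if_closed:
  assumes "x \<in> R" "y \<in> R" "x \<in> S" "y \<notin> S"
    and closed: "\<And>u v. u \<in> R \<Longrightarrow> v \<in> R \<Longrightarrow> adj n u v \<Longrightarrow> u \<in> S \<Longrightarrow> v \<in> S"
  shows "\<not> sol_graph_connected n R"
proof
  assume "sol_graph_connected n R"
  with assms(1,2) have "(\<lambda>u v. u \<in> R \<and> v \<in> R \<and> adj n u v)\<^sup>*\<^sup>* x y"
    by (simp add: sol_graph_connected_def)
  then have "y \<in> S"
    by (induction rule: rtranclp_induct) (use assms(3) closed in blast)+
  with assms(4) show False ..
qed

text \<open>If \<open>x0\<close> dominates every grid point that agrees with it on \<open>M\<close>, then changing a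
  coordinate in \<open>M\<close> is at least as feasible at \<open>x0\<close> as at any such point; so the points
  agreeing with \<open>x0\<close> on \<open>M\<close> form a union of components.\<close>
lemma solset_not_connected_if_isolated:
  assumes x0: "x0 \<in> solset d m n A b"
    and y: "y \<in> solset d m n A b" "l0 \<in> M" "y l0 \<noteq> x0 l0"
    and dominant: "\<And>x i. x \<in> grid d n \<Longrightarrow> \<forall>l\<in>M. x l = x0 l \<Longrightarrow> i \<in> {1..m} \<Longrightarrow>
                     row_val n A i x \<le> row_val n A i x0"
    and isolated: "\<And>l t. l \<in> M \<Longrightarrow> t \<le> d \<Longrightarrow> t \<noteq> x0 l \<Longrightarrow> x0(l := t) \<notin> solset d m n A b"
  shows "\<not> sol_graph_connected n (solset d m n A b)"
proof (rule not_connected_if_closed[OF x0 y(1)])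
  show "x0 \<in> {x. \<forall>l\<in>M. x l = x0 l}" by simp
  show "y \<notin> {x. \<forall>l\<in>M. x l = x0 l}" using y(2,3) by auto
next
  fix u v
  assume u: "u \<in> solset d m n A b" "u \<in> {x. \<forall>l\<in>M. x l = x0 l}"
    and v: "v \<in> solset d m n A b" and "adj n u v"
  have uM: "\<forall>l\<in>M. u l = x0 l" using u(2) by simp
  have ug: "u \<in> grid d n" and vg: "v \<in> grid d n" using u(1) v by (auto simp: solset_iff)
  then obtain l t where l: "l \<in> {1..n}" and v_eq: "v = u(l := t)"
    using adj_grid_imp_upd \<open>adj n u v\<close> by blast
  show "v \<in> {x. \<forall>l\<in>M. x l = x0 l}"
  proof (rule ccontr)
    assume "v \<notin> {x. \<forall>l\<in>M. x l = x0 l}"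
    then obtain l' where l': "l' \<in> M" "(u(l := t)) l' \<noteq> x0 l'"
      unfolding v_eq by blast
    with uM have "l' = l" by (metis fun_upd_other)
    with l' have lM: "l \<in> M" and tl: "t \<noteq> x0 l" by simp_all
    have "v l \<le> d" using vg l by (simp add: grid_def)
    then have td: "t \<le> d" unfolding v_eq by simp
    have "x0(l := t) \<in> solset d m n A b"
      unfolding solset_iff
    proof (intro conjI ballI)
      show "x0(l := t) \<in> grid d n" using x0 l td grid_upd by (simp add: solset_iff)
      fix i assume i: "i \<in> {1..m}"
      have "b i \<le> row_val n A i (u(l := t))" using v i unfolding v_eq solset_iff by blast
      also have "\<dots> = row_val n A i u + A i l * (real t - real (x0 l))"
        using row_val_upd[OF l] uM lM by simp
      also have "\<dots> \<le> row_val n A i x0 + A i l * (real t - real (x0 l))"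
        using dominant[OF ug uM i] by simp
      also have "\<dots> = row_val n A i (x0(l := t))" by (simp add: row_val_upd[OF l])
      finally show "b i \<le> row_val n A i (x0(l := t))" .
    qed
    with isolated[OF lM td tl] show False by contradiction
  qed
qed

definition same_sign_col :: "nat \<Rightarrow> (nat \<Rightarrow> nat \<Rightarrow> real) \<Rightarrow> nat \<Rightarrow> bool" where
  "same_sign_col m A j \<longleftrightarrow> (\<forall>i\<in>{1..m}. 0 \<le> A i j) \<or> (\<forall>i\<in>{1..m}. A i j \<le> 0)"

definition mixed_cols :: "nat \<Rightarrow> nat \<Rightarrow> (nat \<Rightarrow> nat \<Rightarrow> real) \<Rightarrow> nat set" where
  "mixed_cols m n A = {l\<in>{1..n}. \<not> same_sign_col m A l}"

lemma can_elim_if_same_sign: "j \<in> J \<Longrightarrow> same_sign_col m A j \<Longrightarrow> can_elim m A J j"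
  unfolding can_elim_def same_sign_col_def by fastforce

lemma can_elim_singleton: "can_elim m A {j} j"
  by (simp add: can_elim_def)

text \<open>Eliminate the same-sign columns first, in any order, and the exceptional column \<open>k\<close> last.\<close>
lemma has_EO_if_same_sign_but_one:
  assumes "\<And>l. l \<in> {1..n} \<Longrightarrow> l \<noteq> k \<Longrightarrow> same_sign_col m A l"
  shows "has_EO m n A"
proof -
  define front where "front = filter (\<lambda>l. l \<noteq> k) [1..<Suc n]"
  define js where "js = front @ filter (\<lambda>l. l = k) [1..<Suc n]"
  have dist: "distinct js" and set_js: "set js = {1..n}" unfolding js_def front_def by auto
  then have len: "length js = n" using distinct_card by fastforce
  have split_js: "set js = set (take t js) \<union> set (drop t js)" for t
    by (metis append_take_drop_id set_append)
  have "can_elim m A ({1..n} - set (take t js)) (js ! t)" if t: "t < n" for t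
  proof -
    let ?J = "{1..n} - set (take t js)"
    have "js ! t \<in> set (drop t js)" using t len by (metis Cons_nth_drop_Suc list.set_intros(1))
    then have in_J: "js ! t \<in> ?J"
      using set_take_disj_set_drop_if_distinct[OF dist, of t t] set_js split_js by blast
    show ?thesis
    proof (cases "js ! t = k")
      case False
      with in_J show ?thesis using assms can_elim_if_same_sign by blast
    next
      case True
      have "length front \<le> t"
      proof (rule ccontr)
        assume "\<not> length front \<le> t"
        then have "js ! t \<in> set front" by (simp add: js_def nth_append)
        with True show False by (simp add: front_def)
      qed
      then have "set (drop t js) \<subseteq> {k}" unfolding js_def by (auto dest: in_set_dropD)
      then have "?J = {k}" using in_J True set_js split_js by blast
      with True show ?thesis using can_elim_singleton by simp
    qed
  qed
  with dist set_js show ?thesis unfolding has_EO_def is_EO_def by blast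
qed

lemma two_mixed_cols_if_no_EO:
  assumes "\<not> has_EO m n A"
  obtains j k where "j \<in> mixed_cols m n A" "k \<in> mixed_cols m n A" "j \<noteq> k"
proof -
  have ex_mixed: "\<exists>j\<in>mixed_cols m n A. j \<noteq> k" for k
    using assms has_EO_if_same_sign_but_one[of n k m A] unfolding mixed_cols_def by blast
  obtain j where "j \<in> mixed_cols m n A" using ex_mixed by blast
  moreover obtain k where "k \<in> mixed_cols m n A" "j \<noteq> k" using ex_mixed[of j] by blast
  ultimately show ?thesis by (rule that)
qed

lemma mixed_cols_2_iff:
  "l \<in> mixed_cols 2 n A \<longleftrightarrow> l \<in> {1..n} \<and> (0 < A 1 l \<and> A 2 l < 0 \<or> A 1 l < 0 \<and> 0 < A 2 l)"
proof -
  have "{1..2::nat} = {1, 2}" by auto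
  then show ?thesis unfolding mixed_cols_def same_sign_col_def by auto
qed

definition top_point :: "nat \<Rightarrow> nat \<Rightarrow> nat \<Rightarrow> (nat \<Rightarrow> nat \<Rightarrow> real) \<Rightarrow> nat \<Rightarrow> nat" where
  "top_point d m n A l = (if l \<in> {1..n} \<and> (\<forall>i\<in>{1..m}. 0 \<le> A i l) then d else 0)"

lemma top_point_in_grid: "top_point d m n A \<in> grid d n"
  by (simp add: grid_def top_point_def)

lemma top_point_mixed: "l \<in> mixed_cols m n A \<Longrightarrow> top_point d m n A l = 0"
  by (auto simp: top_point_def mixed_cols_def same_sign_col_def)

lemma row_val_le_top_point:
  assumes x: "x \<in> grid d n"
    and mixed: "\<forall>l\<in>mixed_cols m n A. x l = z l"
    and i: "i \<in> {1..m}"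
    and same_sign: "\<forall>l\<in>{1..n} - mixed_cols m n A. z l = top_point d m n A l"
  shows "row_val n A i x \<le> row_val n A i z"
  unfolding row_val_def
proof (rule sum_mono)
  fix l assume l: "l \<in> {1..n}"
  show "A i l * real (x l) \<le> A i l * real (z l)"
  proof (cases "l \<in> mixed_cols m n A")
    case True
    with mixed show ?thesis by simp
  next
    case False
    with l same_sign have z: "z l = top_point d m n A l" by blast
    have "x l \<le> d" using x l by (simp add: grid_def)
    from False l consider "\<forall>i\<in>{1..m}. 0 \<le> A i l"
      | "\<forall>i\<in>{1..m}. A i l \<le> 0" "\<not> (\<forall>i\<in>{1..m}. 0 \<le> A i l)"
      unfolding mixed_cols_def same_sign_col_def by blast
    then show ?thesis
    proof cases
      case 1
      with z l \<open>x l \<le> d\<close> i show ?thesis by (simp add: top_point_def mult_left_mono)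
    next
      case 2
      then have "z l = 0" using z by (auto simp: top_point_def)
      with 2(1) i show ?thesis by (simp add: mult_nonpos_nonneg)
    qed
  qed
qed

lemma row_val_upd_top_point:
  assumes "l \<in> mixed_cols m n A"
  shows "row_val n A i ((top_point d m n A)(l := t)) =
           row_val n A i (top_point d m n A) + A i l * real t"
  using assms row_val_upd[of l n A i _ t] top_point_mixed[OF assms] by (simp add: mixed_cols_def)

lemma mult_lt_min_if_le_neg:
  fixes a a' c t :: real
  assumes "a \<le> a'" "a' < 0" "0 < c" "1 \<le> t"
  shows "a * t < min 0 (a' + c)"
proof -
  have "a * t \<le> a" using assms by (simp add: mult_le_cancel_left1)
  with assms show ?thesis unfolding min_less_iff_conj by linarith
qed

text \<open>Take \<open>x0\<close> the top point and let \<open>y\<close> raise two mixed coordinates \<open>jp\<close>, \<open>kn\<close> to 1, where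
  \<open>jp\<close> (\<open>kn\<close>) has the least negative entry in row 2 (row 1) among the mixed columns.
  Raising a single mixed coordinate of \<open>x0\<close> then loses at least as much in one row as \<open>jp\<close>
  resp. \<open>kn\<close> alone, which is more than \<open>y\<close> loses there.\<close>
lemma ex_disconnecting_rhs_opposite_signs:
  assumes "0 < d"
    and "j \<in> mixed_cols 2 n A" "0 < A 1 j" and "k \<in> mixed_cols 2 n A" "A 1 k < 0"
  shows "\<exists>b. \<not> sol_graph_connected n (solset d 2 n A b)"
proof -
  let ?M = "mixed_cols 2 n A" and ?z = "top_point d 2 n A"
  have fin: "finite {l\<in>?M. P l}" for P by (simp add: mixed_cols_def)
  obtain jp where jp: "jp \<in> ?M" "0 < A 1 jp" and jp_max: "\<forall>l\<in>?M. 0 < A 1 l \<longrightarrow> A 2 l \<le> A 2 jp"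
    using ex_is_arg_min_if_finite[OF fin, of "\<lambda>l. 0 < A 1 l" "\<lambda>l. - A 2 l"] assms(2,3)
    by (fastforce simp: is_arg_min_linorder)
  obtain kn where kn: "kn \<in> ?M" "A 1 kn < 0" and kn_max: "\<forall>l\<in>?M. A 1 l < 0 \<longrightarrow> A 1 l \<le> A 1 kn"
    using ex_is_arg_min_if_finite[OF fin, of "\<lambda>l. A 1 l < 0" "\<lambda>l. - A 1 l"] assms(4,5)
    by (fastforce simp: is_arg_min_linorder)
  have "A 2 jp < 0" "0 < A 2 kn" "jp \<noteq> kn" using jp kn by (auto simp: mixed_cols_2_iff)
  define y where "y = ?z(jp := 1, kn := 1)"
  define b where "b i = row_val n A i ?z + min 0 (A i jp + A i kn)" for i
  show ?thesis
  proof (intro exI solset_not_connected_if_isolated)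
    show "?z \<in> solset d 2 n A b" by (simp add: solset_iff b_def top_point_in_grid)
    have "jp \<in> {1..n}" "kn \<in> {1..n}" using jp kn by (simp_all add: mixed_cols_def)
    then have "y \<in> grid d n" unfolding y_def using assms(1) by (simp add: grid_upd top_point_in_grid)
    moreover have "row_val n A i y = row_val n A i ?z + A i jp + A i kn" for i
      using \<open>jp \<noteq> kn\<close> jp(1) kn(1) \<open>kn \<in> {1..n}\<close>
      by (simp add: y_def row_val_upd row_val_upd_top_point top_point_mixed)
    ultimately show "y \<in> solset d 2 n A b" by (simp add: solset_iff b_def)
    show "jp \<in> ?M" by (rule jp(1))
    show "y jp \<noteq> ?z jp" using \<open>jp \<noteq> kn\<close> jp(1) by (simp add: y_def top_point_mixed)
    show "row_val n A i x \<le> row_val n A i ?z"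
      if "x \<in> grid d n" "\<forall>l\<in>?M. x l = ?z l" "i \<in> {1..2}" for x i
      using row_val_le_top_point that by blast
  next
    fix l t assume l: "l \<in> ?M" and "t \<le> d" "t \<noteq> ?z l"
    then have t: "1 \<le> real t" by (simp add: top_point_mixed)
    from l consider "0 < A 1 l" "A 2 l < 0" | "A 1 l < 0" "0 < A 2 l"
      unfolding mixed_cols_2_iff by blast
    then have "A 1 l * real t < min 0 (A 1 kn + A 1 jp) \<or> A 2 l * real t < min 0 (A 2 jp + A 2 kn)"
    proof cases
      case 1
      then show ?thesis
        using jp_max l mult_lt_min_if_le_neg[OF _ \<open>A 2 jp < 0\<close> \<open>0 < A 2 kn\<close> t] by auto
    next
      case 2
      then show ?thesis using kn_max l mult_lt_min_if_le_neg[OF _ kn(2) jp(2) t] by auto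
    qed
    then show "?z(l := t) \<notin> solset d 2 n A b"
      by (auto simp: solset_2_iff[of 1 2] b_def row_val_upd_top_point[OF l] add.commute)
  qed
qed

text \<open>Let \<open>x0\<close> and \<open>y\<close> raise the mixed coordinates \<open>k'\<close> resp. \<open>j'\<close> of the top point to 1,
  where \<open>k'\<close> has the most negative entry in row \<open>q\<close>. Raising a mixed coordinate of \<open>x0\<close>
  loses in row \<open>q\<close>; the only other move, lowering \<open>k'\<close> to 0, loses \<open>A p k'\<close> in row \<open>p\<close>,
  more than \<open>y\<close> loses there.\<close>
lemma ex_disconnecting_rhs_same_signs:
  assumes rows: "{p, q} = {1, 2::nat}" and "0 < d"
    and "j \<in> mixed_cols 2 n A" "k \<in> mixed_cols 2 n A" "j \<noteq> k"
    and signs: "\<And>l. l \<in> mixed_cols 2 n A \<Longrightarrow> 0 < A p l \<and> A q l < 0"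
  shows "\<exists>b. \<not> sol_graph_connected n (solset d 2 n A b)"
proof -
  let ?M = "mixed_cols 2 n A" and ?z = "top_point d 2 n A"
  have "p \<noteq> q" using rows by auto
  have M_sub: "?M \<subseteq> {1..n}" by (auto simp: mixed_cols_def)
  obtain k' where k': "k' \<in> ?M" and k'_min: "\<forall>l\<in>?M. A q k' \<le> A q l"
    using ex_is_arg_min_if_finite[of ?M "\<lambda>l. A q l"] finite_subset[OF M_sub] assms(3)
    by (fastforce simp: is_arg_min_linorder)
  obtain j' where j': "j' \<in> ?M" "j' \<noteq> k'" using assms(3-5) by metis
  define x0 where "x0 = ?z(k' := 1)"
  define y where "y = ?z(j' := 1)"
  define b where
    "b i = (if i = p then row_val n A p x0 + min 0 (A p j' - A p k') else row_val n A q x0)" for i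
  have x0_M: "x0 l = (if l = k' then 1 else 0)" if "l \<in> ?M" for l
    using that by (simp add: x0_def top_point_mixed)
  have row_x0: "row_val n A i x0 = row_val n A i ?z + A i k'" for i
    using k' by (simp add: x0_def row_val_upd_top_point)
  have row_y: "row_val n A i y = row_val n A i ?z + A i j'" for i
    using j' by (simp add: y_def row_val_upd_top_point)
  have grid: "?z(l := 1) \<in> grid d n" if "l \<in> ?M" for l
    using that M_sub assms(2) by (intro grid_upd top_point_in_grid) auto
  show ?thesis
  proof (intro exI solset_not_connected_if_isolated)
    show "x0 \<in> solset d 2 n A b"
      using grid[OF k'] \<open>p \<noteq> q\<close> by (simp add: solset_2_iff[OF rows] b_def x0_def)
    show "y \<in> solset d 2 n A b"
      using grid[OF j'(1), folded y_def] \<open>p \<noteq> q\<close> k'_min j'(1)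
      by (simp add: solset_2_iff[OF rows] b_def row_x0 row_y min_def)
    show "j' \<in> ?M" by (rule j'(1))
    show "y j' \<noteq> x0 j'" using j' by (simp add: y_def x0_M)
    show "row_val n A i x \<le> row_val n A i x0"
      if "x \<in> grid d n" "\<forall>l\<in>?M. x l = x0 l" "i \<in> {1..2}" for x i
      by (rule row_val_le_top_point[OF that]) (use k' in \<open>auto simp: x0_def\<close>)
  next
    fix l t assume l: "l \<in> ?M" and "t \<le> d" "t \<noteq> x0 l"
    have row_t:
      "row_val n A i (x0(l := t)) = row_val n A i x0 + A i l * (real t - real (x0 l))" for i
      using l M_sub by (intro row_val_upd) blast
    have "x0 l \<le> 1" using x0_M[OF l] by simp
    with \<open>t \<noteq> x0 l\<close> consider "x0 l < t" | "x0 l = 1" "t = 0" by (cases "x0 l < t") auto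
    then show "x0(l := t) \<notin> solset d 2 n A b"
    proof cases
      case 1
      then have "A q l * (real t - real (x0 l)) < 0" using signs[OF l] by (simp add: mult_neg_pos)
      then show ?thesis using \<open>p \<noteq> q\<close> by (simp add: solset_2_iff[OF rows] b_def row_t)
    next
      case 2
      then have "l = k'" using x0_M[OF l] by presburger
      have "row_val n A p (x0(l := t)) = row_val n A p x0 + A p l * (real t - real (x0 l))"
        by (rule row_t)
      also have "\<dots> = row_val n A p x0 - A p k'" using 2 \<open>l = k'\<close> by simp
      also have "\<dots> < b p" using signs[OF k'] signs[OF j'(1)] by (simp add: b_def min_def)
      finally show ?thesis by (simp add: solset_2_iff[OF rows])
    qed
  qed
qed

lemma ex_disconnecting_rhs_if_two_mixed_cols:
  assumes "0 < d" and jk: "j \<in> mixed_cols 2 n A" "k \<in> mixed_cols 2 n A" "j \<noteq> k"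
  shows "\<exists>b. \<not> sol_graph_connected n (solset d 2 n A b)"
proof -
  let ?M = "mixed_cols 2 n A"
  consider (opposite) l l' where "l \<in> ?M" "0 < A 1 l" "l' \<in> ?M" "A 1 l' < 0"
    | (positive) "\<And>l. l \<in> ?M \<Longrightarrow> 0 < A 1 l \<and> A 2 l < 0"
    | (negative) "\<And>l. l \<in> ?M \<Longrightarrow> 0 < A 2 l \<and> A 1 l < 0"
    unfolding mixed_cols_2_iff by metis
  then show ?thesis
  proof cases
    case opposite
    then show ?thesis using ex_disconnecting_rhs_opposite_signs assms(1) by blast
  next
    case positive
    show ?thesis by (rule ex_disconnecting_rhs_same_signs[of 1 2, OF _ assms(1) jk positive]) auto
  next
    case negative
    show ?thesis by (rule ex_disconnecting_rhs_same_signs[of 2 1, OF _ assms(1) jk negative]) auto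
  qed
qed

theorem lemma4:
  fixes d n :: nat and A :: "nat \<Rightarrow> nat \<Rightarrow> real"
  assumes "d > 0"
    and "\<not> has_EO 2 n A"
  shows "\<exists>b :: nat \<Rightarrow> real. \<not> sol_graph_connected n (solset d 2 n A b)"
proof -
  obtain j k where "j \<in> mixed_cols 2 n A" "k \<in> mixed_cols 2 n A" "j \<noteq> k"
    using two_mixed_cols_if_no_EO[OF assms(2)] .
  then show ?thesis by (rule ex_disconnecting_rhs_if_two_mixed_cols[OF assms(1)])
qed

end
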